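(* Consider a CMILS instance and let $x$ satisfy $x_{s,i}\in[0,1]$ for all $i\in[N]$, $s\in[r_i]$, and $\sum_{s\in[r_i]}x_{s,i}=1$ for every $i\in[N]$. For every interval $(a,b]$ over $[T]$ define $$R_{a,b}:=\sum_{i\in[N]:\ r_i\in(a,b]}\max\Big\{1-\tfrac52x_{[a],i},\,0\Big\}d_i .$$ Let $y^*\in\{0,1\}^T$ and $S^*=\{s\in[T]:y^*_s=1\}$. If $C(S^*\cap(a,b])\ge R_{a,b}$ for every interval $(a,b]$ over $[T]$, then there exists $x^*$ such that $(x^*,y^* )$ is a feasible solution to the CMILS instance and $\mathrm{hcost}(x^* )\le\frac52\,\mathrm{hcost}(x)$.
   Context: CMILS problem: periods $[T]$, items $[N]$; item $i$ has demand $d_i>0$ due by time $r_i\in[T]$; period $s$ has ordering cost $K_s>0$ and capacity $C_s>0$; $h_i(s)\ge0$ ($s\in[r_i]$) is the per-unit holding cost of item $i$ from $s$ to $r_i$, non-increasing in $s$ with $h_i(r_i)=0$. A feasible solution is $(x,y)$ with $y\in\{0,1\}^T$, $x_{s,i}\in[0,1]$ ($i\in[N]$, $s\in[r_i]$), $\sum_{s\in[r_i]}x_{s,i}=1$ for every $i$, $x_{s,i}\le y_s$, and $\sum_{i: r_i\ge s}x_{s,i}d_i\le y_sC_s$ for every $s$. Notation: $x_{s,i}=0$ for $s>r_i$; $x_{S,i}=\sum_{s\in S}x_{s,i}$ for $S\subseteq[T]$; $[a]=\{1,\dots,a\}$ ($[0]=\emptyset$); $(a,b]=\{a+1,\dots,b\}$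 and an interval over $[T]$ is $(a,b]$ with integers $0\le a<b\le T$; $C(S)=\sum_{s\in S}C_s$; $\mathrm{hcost}(x)=\sum_{i\in[N]}d_i\sum_{s\in[r_i]}x_{s,i}h_i(s)$. *)

theory Defs
  imports "HOL-Analysis.Analysis"
begin

text \<open>Periods are 1..T, items are 1..N. x s i is the fraction of item i ordered in period s.\<close>

definition cmils_instance ::
  "nat \<Rightarrow> nat \<Rightarrow> (nat \<Rightarrow> real) \<Rightarrow> (nat \<Rightarrow> nat) \<Rightarrow> (nat \<Rightarrow> real) \<Rightarrow> (nat \<Rightarrow> real)
   \<Rightarrow> (nat \<Rightarrow> nat \<Rightarrow> real) \<Rightarrow> bool" where
  "cmils_instance T N d r K C h \<longleftrightarrow>
     (\<forall>i\<in>{1..N}. d i > 0 \<and> r i \<in> {1..T}) \<and>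
     (\<forall>s\<in>{1..T}. K s > 0 \<and> C s > 0) \<and>
     (\<forall>i\<in>{1..N}. (\<forall>s\<in>{1..r i}. h i s \<ge> 0) \<and>
        (\<forall>s\<in>{1..r i}. \<forall>s'\<in>{1..r i}. s \<le> s' \<longrightarrow> h i s' \<le> h i s) \<and>
        h i (r i) = 0)"

definition frac_assignment :: "nat \<Rightarrow> (nat \<Rightarrow> nat) \<Rightarrow> (nat \<Rightarrow> nat \<Rightarrow> real) \<Rightarrow> bool" where
  "frac_assignment N r x \<longleftrightarrow>
     (\<forall>i\<in>{1..N}. (\<forall>s\<in>{1..r i}. 0 \<le> x s i \<and> x s i \<le> 1) \<and> (\<Sum>s\<in>{1..r i}. x s i) = 1)"

definition cmils_feasible ::
  "nat \<Rightarrow> nat \<Rightarrow> (nat \<Rightarrow> real) \<Rightarrow> (nat \<Rightarrow> nat) \<Rightarrow> (nat \<Rightarrow> real)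
   \<Rightarrow> (nat \<Rightarrow> nat \<Rightarrow> real) \<Rightarrow> (nat \<Rightarrow> real) \<Rightarrow> bool" where
  "cmils_feasible T N d r C x y \<longleftrightarrow>
     (\<forall>s\<in>{1..T}. y s \<in> {0, 1}) \<and>
     frac_assignment N r x \<and>
     (\<forall>i\<in>{1..N}. \<forall>s\<in>{1..r i}. x s i \<le> y s) \<and>
     (\<forall>s\<in>{1..T}. (\<Sum>i\<in>{i\<in>{1..N}. r i \<ge> s}. x s i * d i) \<le> y s * C s)"

definition hcost ::
  "nat \<Rightarrow> (nat \<Rightarrow> real) \<Rightarrow> (nat \<Rightarrow> nat) \<Rightarrow> (nat \<Rightarrow> nat \<Rightarrow> real) \<Rightarrow> (nat \<Rightarrow> nat \<Rightarrow> real) \<Rightarrow> real" where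
  "hcost N d r h x = (\<Sum>i\<in>{1..N}. d i * (\<Sum>s\<in>{1..r i}. x s i * h i s))"

text \<open>x_{[a],i}; the convention x_{s,i}=0 for s > r_i is built in.\<close>
definition xsum :: "(nat \<Rightarrow> nat) \<Rightarrow> (nat \<Rightarrow> nat \<Rightarrow> real) \<Rightarrow> nat set \<Rightarrow> nat \<Rightarrow> real" where
  "xsum r x S i = (\<Sum>s\<in>{s\<in>S. s \<le> r i}. x s i)"

definition Rab ::
  "nat \<Rightarrow> (nat \<Rightarrow> real) \<Rightarrow> (nat \<Rightarrow> nat) \<Rightarrow> (nat \<Rightarrow> nat \<Rightarrow> real) \<Rightarrow> nat \<Rightarrow> nat \<Rightarrow> real" where
  "Rab N d r x a b = (\<Sum>i\<in>{i\<in>{1..N}. r i \<in> {a<..b}}. max (1 - 5/2 * xsum r x {1..a} i) 0 * d i)"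

end

theory Submission
  imports Defs
begin

text \<open>
  Read the construction of x* as a scheduling problem: item i must receive a total fraction 1 by
  its due period r_i, but at most u_i(s) = min(1, 5/2 x_{[s],i}) of it by period s, and period s
  offers capacity y*_s C_s. Since at most u_i(a) can be served by period a, the demand that must be
  served in (a,b] is R_{a,b}, so the hypothesis is a Hall-type condition, and it is also sufficient
  (induction on the horizon): the items due in the last period are served there as far as the
  capacity allows, choosing the amounts so that what remains satisfies the condition on the
  shortened horizon. The cumulative amounts of such a schedule are at most 5/2 times those of x,
  and the holding costs are non-increasing in time, so summation by parts bounds the holding cost.
\<close>

lemma summation_by_parts:
  fixes f g :: "nat \<Rightarrow> 'a::comm_ring"
  shows "(\<Sum>s\<in>{1..n}. f s * g s)
       = (\<Sum>s\<in>{1..<n}. (\<Sum>t\<in>{1..s}. f t) * (g s - g (Suc s))) + (\<Sum>t\<in>{1..n}. f t) * g n"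
proof (induction n)
  case (Suc n)
  have "{1..<Suc n} = (if n = 0 then {} else insert n {1..<n})"
    by auto
  with Suc show ?case
    by (simp add: algebra_simps)
qed simp

lemma sum_mult_le_of_partial_sums_le:
  fixes f g w :: "nat \<Rightarrow> 'a::ordered_comm_ring"
  assumes "\<And>s. s \<in> {1..<n} \<Longrightarrow> w (Suc s) \<le> w s"
    and "0 \<le> w n"
    and partial: "\<And>s. s \<le> n \<Longrightarrow> (\<Sum>t\<in>{1..s}. f t) \<le> (\<Sum>t\<in>{1..s}. g t)"
  shows "(\<Sum>s\<in>{1..n}. f s * w s) \<le> (\<Sum>s\<in>{1..n}. g s * w s)"
  unfolding summation_by_parts[of f] summation_by_parts[of g]
  by (intro add_mono sum_mono mult_right_mono partial) (use assms in auto)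

lemma sum_interpolation:
  fixes lo hi d :: "'i \<Rightarrow> real"
  assumes "(\<Sum>i\<in>A. lo i * d i) \<le> c" and "c \<le> (\<Sum>i\<in>A. hi i * d i)"
  obtains \<theta> where "0 \<le> \<theta>" and "\<theta> \<le> 1" and "(\<Sum>i\<in>A. (lo i + \<theta> * (hi i - lo i)) * d i) = c"
proof
  define L H where "L = (\<Sum>i\<in>A. lo i * d i)" and "H = (\<Sum>i\<in>A. hi i * d i)"
  have sum_eq: "(\<Sum>i\<in>A. (lo i + \<theta> * (hi i - lo i)) * d i) = L + \<theta> * (H - L)" for \<theta>
    unfolding L_def H_def
    by (simp add: algebra_simps sum.distrib sum_distrib_left sum_subtractf)
  show "0 \<le> (c - L) / (H - L)" "(c - L) / (H - L) \<le> 1"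
    using assms unfolding L_def[symmetric] H_def[symmetric] by (auto simp: divide_le_eq_1)
  \<comment> \<open>If H = L then c = L, and the quotient is 0 by the convention x / 0 = 0.\<close>
  show "(\<Sum>i\<in>A. (lo i + (c - L) / (H - L) * (hi i - lo i)) * d i) = c"
    using assms unfolding sum_eq L_def[symmetric] H_def[symmetric]
    by (cases "H = L") auto
qed

text \<open>
  Scheduling model: item i of size d i needs the amount m i by its due period r i, of which at
  most u i s may be served up to period s; z s i is the amount served in period s, which has
  capacity c s.
\<close>

definition residual_demand ::
  "'i set \<Rightarrow> ('i \<Rightarrow> real) \<Rightarrow> ('i \<Rightarrow> nat \<Rightarrow> real) \<Rightarrow> ('i \<Rightarrow> real) \<Rightarrow> ('i \<Rightarrow> nat) \<Rightarrow> nat \<Rightarrow> nat \<Rightarrow> real"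
  where "residual_demand I d u m r a b = (\<Sum>i\<in>{i\<in>I. r i \<le> b}. max (m i - u i a) 0 * d i)"

definition capacity_condition ::
  "'i set \<Rightarrow> ('i \<Rightarrow> real) \<Rightarrow> ('i \<Rightarrow> nat \<Rightarrow> real) \<Rightarrow> nat \<Rightarrow> ('i \<Rightarrow> real) \<Rightarrow> ('i \<Rightarrow> nat) \<Rightarrow> (nat \<Rightarrow> real) \<Rightarrow> bool"
  where "capacity_condition I d u T m r c \<longleftrightarrow>
    (\<forall>a b. a < b \<longrightarrow> b \<le> T \<longrightarrow> residual_demand I d u m r a b \<le> (\<Sum>s\<in>{a<..b}. c s))"

definition capped_schedule ::
  "'i set \<Rightarrow> ('i \<Rightarrow> real) \<Rightarrow> ('i \<Rightarrow> nat \<Rightarrow> real) \<Rightarrow> nat \<Rightarrow> ('i \<Rightarrow> real) \<Rightarrow> ('i \<Rightarrow> nat) \<Rightarrow> (nat \<Rightarrow> real)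
    \<Rightarrow> (nat \<Rightarrow> 'i \<Rightarrow> real) \<Rightarrow> bool"
  where "capped_schedule I d u T m r c z \<longleftrightarrow>
    (\<forall>i\<in>I. (\<forall>s\<in>{1..r i}. 0 \<le> z s i) \<and> (\<Sum>s\<in>{1..r i}. z s i) = m i \<and>
      (\<forall>s\<le>r i. (\<Sum>t\<in>{1..s}. z t i) \<le> u i s)) \<and>
    (\<forall>s\<in>{1..T}. (\<Sum>i\<in>{i\<in>I. s \<le> r i}. z s i * d i) \<le> c s)"

lemma residual_demand_Suc:
  assumes "finite I"
  shows "residual_demand I d u m r a (Suc n)
       = (\<Sum>i\<in>{i\<in>I. r i = Suc n}. max (m i - u i a) 0 * d i) + residual_demand I d u m r a n"
proof -
  have "{i\<in>I. r i \<le> Suc n} = {i\<in>I. r i = Suc n} \<union> {i\<in>I. r i \<le> n}"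
    by auto
  then show ?thesis
    unfolding residual_demand_def using assms by (auto intro: sum.union_disjoint)
qed

lemma capped_schedule_extend:
  assumes sched: "capped_schedule I d u n (\<lambda>i. m i - w i) (\<lambda>i. min (r i) n) c z"
    and due: "\<And>i. i \<in> I \<Longrightarrow> r i \<le> Suc n"
    and m_le: "\<And>i. i \<in> I \<Longrightarrow> m i \<le> u i (r i)"
    and w_nonneg: "\<And>i. i \<in> I \<Longrightarrow> 0 \<le> w i"
    and w_0: "\<And>i. i \<in> I \<Longrightarrow> r i \<noteq> Suc n \<Longrightarrow> w i = 0"
    and w_cap: "(\<Sum>i\<in>{i\<in>I. r i = Suc n}. w i * d i) \<le> c (Suc n)"
  shows "capped_schedule I d u (Suc n) m r c (z(Suc n := w))"
proof -
  let ?z = "z(Suc n := w)"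
  have prefix_eq: "(\<Sum>t\<in>{1..s}. ?z t i) = (\<Sum>t\<in>{1..s}. z t i)" if "s \<le> n" for s i
    using that by (intro sum.cong) auto
  have total: "(\<Sum>s\<in>{1..r i}. ?z s i) = w i + (\<Sum>s\<in>{1..min (r i) n}. z s i)" if i: "i \<in> I" for i
  proof (cases "r i = Suc n")
    case True
    then show ?thesis
      by (simp add: prefix_eq)
  next
    case False
    with due[OF i] w_0[OF i] show ?thesis
      by (simp add: prefix_eq min_absorb1)
  qed
  have item: "(\<forall>s\<in>{1..r i}. 0 \<le> ?z s i) \<and> (\<Sum>s\<in>{1..r i}. ?z s i) = m i \<and>
      (\<forall>s\<le>r i. (\<Sum>t\<in>{1..s}. ?z t i) \<le> u i s)" if i: "i \<in> I" for i
  proof (intro conjI ballI allI impI)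
    have old: "(\<forall>s\<in>{1..min (r i) n}. 0 \<le> z s i) \<and> (\<Sum>s\<in>{1..min (r i) n}. z s i) = m i - w i \<and>
        (\<forall>s\<le>min (r i) n. (\<Sum>t\<in>{1..s}. z t i) \<le> u i s)"
      using sched i unfolding capped_schedule_def by blast
    show "0 \<le> ?z s i" if "s \<in> {1..r i}" for s
      using that old due[OF i] w_nonneg[OF i] by auto
    show sum_m: "(\<Sum>s\<in>{1..r i}. ?z s i) = m i"
      using total[OF i] old by simp
    show "(\<Sum>t\<in>{1..s}. ?z t i) \<le> u i s" if "s \<le> r i" for s
    proof (cases "s = Suc n")
      case True
      with that due[OF i] have "s = r i"
        by simp
      with sum_m m_le[OF i] show ?thesis
        by simp
    next
      case False
      with that due[OF i] show ?thesis
        using old by (simp add: prefix_eq)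
    qed
  qed
  have load: "(\<Sum>i\<in>{i\<in>I. s \<le> r i}. ?z s i * d i) \<le> c s" if s: "s \<in> {1..Suc n}" for s
  proof (cases "s = Suc n")
    case True
    with due have "{i\<in>I. s \<le> r i} = {i\<in>I. r i = Suc n}"
      by force
    with True w_cap show ?thesis
      by simp
  next
    case False
    with s have "{i\<in>I. s \<le> r i} = {i\<in>I. s \<le> min (r i) n}" "s \<in> {1..n}"
      by auto
    with False sched show ?thesis
      unfolding capped_schedule_def by simp
  qed
  from item load show ?thesis
    unfolding capped_schedule_def by blast
qed

locale capped_scheduling =
  fixes I :: "'i set" and d :: "'i \<Rightarrow> real" and u :: "'i \<Rightarrow> nat \<Rightarrow> real"
  assumes finite_items: "finite I"
    and weight_nonneg: "i \<in> I \<Longrightarrow> 0 \<le> d i"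
    and mono_cap: "i \<in> I \<Longrightarrow> mono (u i)"
    and cap_0: "i \<in> I \<Longrightarrow> u i 0 = 0"
begin

lemma cap_nonneg: "i \<in> I \<Longrightarrow> 0 \<le> u i s"
  using monoD[OF mono_cap, of i 0 s] cap_0 by simp

lemma last_period_amounts:
  assumes "A \<subseteq> I" and m_nonneg: "\<And>i. i \<in> A \<Longrightarrow> 0 \<le> m i"
    and last: "(\<Sum>i\<in>A. max (m i - u i n) 0 * d i) \<le> c"
  obtains w k where "\<And>i. i \<notin> A \<Longrightarrow> w i = 0" and "k \<le> n"
    and "\<And>i. i \<in> A \<Longrightarrow> 0 \<le> w i \<and> w i \<le> m i \<and> m i - w i \<le> u i k"
    and "(\<Sum>i\<in>A. w i * d i) \<le> c" and "0 < k \<Longrightarrow> (\<Sum>i\<in>A. w i * d i) = c"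
    and "\<And>i a. i \<in> A \<Longrightarrow> a < k \<Longrightarrow>
      max (m i - w i - u i a) 0 = max (m i - u i a) 0 - w i"
proof -
  define p where "p i t = max (m i - u i t) 0" for i t
  define P where "P t = (\<Sum>i\<in>A. p i t * d i)" for t
  have u_nonneg: "i \<in> A \<Longrightarrow> 0 \<le> u i t" for i t
    using cap_nonneg \<open>A \<subseteq> I\<close> by blast
  have u_mono: "i \<in> A \<Longrightarrow> s \<le> t \<Longrightarrow> u i s \<le> u i t" for i s t
    using mono_cap \<open>A \<subseteq> I\<close> by (blast dest: monoD)
  show ?thesis
  proof (cases "P 0 \<le> c")
    case True
    have "P 0 = (\<Sum>i\<in>A. m i * d i)"
      unfolding P_def p_def using cap_0 m_nonneg \<open>A \<subseteq> I\<close> by (intro sum.cong) auto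
    with True show ?thesis
      by (intro that[of "\<lambda>i. if i \<in> A then m i else 0" 0]) (auto simp: u_nonneg m_nonneg)
  next
    case False
    \<comment> \<open>k is the first period after which the residual demand of A fits into c; w uses c
      exactly, lying between the residual demands after k and after k - 1.\<close>
    define k where "k = (LEAST t. P t \<le> c)"
    have "P n \<le> c"
      using last unfolding P_def p_def .
    then have k_le: "k \<le> n" and Pk: "P k \<le> c"
      unfolding k_def by (auto intro: Least_le LeastI)
    with False obtain t where k: "k = Suc t"
      by (cases k) auto
    then have Pt: "c \<le> P t"
      using not_less_Least[of t "\<lambda>t. P t \<le> c"] unfolding k_def by auto
    from Pk Pt obtain \<theta> where \<theta>: "0 \<le> \<theta>" "\<theta> \<le> 1"
      and sum_\<theta>: "(\<Sum>i\<in>A. (p i k + \<theta> * (p i t - p i k)) * d i) = c"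
      unfolding P_def by (rule sum_interpolation)
    define w where "w i = (if i \<in> A then p i k + \<theta> * (p i t - p i k) else 0)" for i
    have w_between: "p i k \<le> w i \<and> w i \<le> p i t" if "i \<in> A" for i
    proof -
      have "p i k \<le> p i t"
        unfolding p_def k using u_mono[OF that, of t "Suc t"] by auto
      then have "\<theta> * (p i t - p i k) \<le> p i t - p i k"
        using \<theta> by (simp add: mult_left_le_one_le)
      with \<theta> \<open>p i k \<le> p i t\<close> that show ?thesis
        unfolding w_def by simp
    qed
    have sum_w: "(\<Sum>i\<in>A. w i * d i) = c"
      unfolding sum_\<theta>[symmetric] w_def by (rule sum.cong) simp_all
    show ?thesis
    proof (rule that[of w k])
      fix i assume i: "i \<in> A"
      show "0 \<le> w i \<and> w i \<le> m i \<and> m i - w i \<le> u i k"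
        using w_between[OF i] u_nonneg[OF i, of t] m_nonneg[OF i] unfolding p_def by auto
      fix a assume "a < k"
      then have "u i a \<le> u i t"
        using u_mono[OF i] k by simp
      then show "max (m i - w i - u i a) 0 = max (m i - u i a) 0 - w i"
        using w_between[OF i] unfolding p_def by auto
    qed (use k_le sum_w in \<open>simp_all add: w_def\<close>)
  qed
qed

lemma residual_demand_nonneg: "0 \<le> residual_demand I d u m r a b"
  unfolding residual_demand_def by (intro sum_nonneg mult_nonneg_nonneg weight_nonneg) auto

lemma capacity_condition_after_last_period:
  assumes cond: "capacity_condition I d u (Suc n) m r c"
    and due: "\<And>i. i \<in> I \<Longrightarrow> r i \<le> Suc n"
    and w_0: "\<And>i. i \<in> I \<Longrightarrow> r i \<noteq> Suc n \<Longrightarrow> w i = 0"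
    and above_k: "\<And>i. i \<in> I \<Longrightarrow> r i = Suc n \<Longrightarrow> m i - w i \<le> u i k"
    and below_k: "\<And>i a. i \<in> I \<Longrightarrow> r i = Suc n \<Longrightarrow> a < k \<Longrightarrow>
      max (m i - w i - u i a) 0 = max (m i - u i a) 0 - w i"
    and full: "0 < k \<Longrightarrow> (\<Sum>i\<in>{i\<in>I. r i = Suc n}. w i * d i) = c (Suc n)"
  shows "capacity_condition I d u n (\<lambda>i. m i - w i) (\<lambda>i. min (r i) n) c"
  unfolding capacity_condition_def
proof (intro allI impI)
  fix a b assume "a < b" "b \<le> n"
  let ?A = "{i\<in>I. r i = Suc n}"
  have old: "residual_demand I d u m r a b' \<le> (\<Sum>s\<in>{a<..b'}. c s)" if "a < b'" "b' \<le> Suc n" for b'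
    using cond that unfolding capacity_condition_def by blast
  have unchanged: "residual_demand I d u (\<lambda>i. m i - w i) (\<lambda>i. min (r i) n) a b'
      = residual_demand I d u m r a b'" if "b' < n" for b'
    unfolding residual_demand_def using that w_0 by (intro sum.cong) auto
  show "residual_demand I d u (\<lambda>i. m i - w i) (\<lambda>i. min (r i) n) a b \<le> (\<Sum>s\<in>{a<..b}. c s)"
  proof (cases "b < n")
    case True
    with old[of b] \<open>a < b\<close> \<open>b \<le> n\<close> show ?thesis
      by (simp add: unchanged)
  next
    case False
    with \<open>b \<le> n\<close> have b: "b = n"
      by simp
    have "residual_demand I d u (\<lambda>i. m i - w i) (\<lambda>i. min (r i) n) a n
        = residual_demand I d u (\<lambda>i. m i - w i) r a (Suc n)"
      unfolding residual_demand_def using due by (intro sum.cong) auto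
    also have "\<dots> = (\<Sum>i\<in>?A. max (m i - w i - u i a) 0 * d i) + residual_demand I d u m r a n"
      unfolding residual_demand_Suc[OF finite_items] unfolding residual_demand_def
      using w_0 by (intro arg_cong2[where f = "(+)"] sum.cong) auto
    finally have new: "residual_demand I d u (\<lambda>i. m i - w i) (\<lambda>i. min (r i) n) a n
        = (\<Sum>i\<in>?A. max (m i - w i - u i a) 0 * d i) + residual_demand I d u m r a n" .
    show ?thesis
    proof (cases "k \<le> a")
      case True
      have "m i - w i - u i a \<le> 0" if "i \<in> ?A" for i
        using above_k[of i] monoD[OF mono_cap True, of i] that by auto
      then have "(\<Sum>i\<in>?A. max (m i - w i - u i a) 0 * d i) = 0"
        by (intro sum.neutral) auto
      with new old[of n] \<open>a < b\<close> b show ?thesis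
        by simp
    next
      case False
      then have "(\<Sum>i\<in>?A. max (m i - w i - u i a) 0 * d i)
          = (\<Sum>i\<in>?A. max (m i - u i a) 0 * d i) - c (Suc n)"
        using below_k full by (simp add: left_diff_distrib sum_subtractf)
      moreover have "{a<..Suc n} = insert (Suc n) {a<..n}"
        using \<open>a < b\<close> b by auto
      ultimately show ?thesis
        using new old[of "Suc n"] \<open>a < b\<close> b
        unfolding residual_demand_Suc[OF finite_items] by simp
    qed
  qed
qed

theorem capped_schedule_exists:
  assumes "\<And>i. i \<in> I \<Longrightarrow> 0 \<le> m i \<and> m i \<le> u i (r i) \<and> r i \<le> T"
    and "capacity_condition I d u T m r c"
  shows "\<exists>z. capped_schedule I d u T m r c z"
  using assms
proof (induction T arbitrary: m r)
  case 0
  then have "r i = 0 \<and> m i = 0" if "i \<in> I" for i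
    using cap_0 that by force
  then show ?case
    unfolding capped_schedule_def by (intro exI[of _ "\<lambda>_ _. 0"]) (auto simp: cap_0)
next
  case (Suc n)
  let ?A = "{i\<in>I. r i = Suc n}"
  have "(\<Sum>i\<in>?A. max (m i - u i n) 0 * d i) \<le> residual_demand I d u m r n (Suc n)"
    unfolding residual_demand_Suc[OF finite_items] using residual_demand_nonneg by simp
  also have "\<dots> \<le> (\<Sum>s\<in>{n<..Suc n}. c s)"
    using Suc.prems(2) unfolding capacity_condition_def by blast
  finally have last: "(\<Sum>i\<in>?A. max (m i - u i n) 0 * d i) \<le> c (Suc n)"
    by (simp flip: atLeastSucAtMost_greaterThanAtMost)
  have A_sub: "?A \<subseteq> I" and m_nonneg: "\<And>i. i \<in> ?A \<Longrightarrow> 0 \<le> m i"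
    using Suc.prems(1) by auto
  obtain w k where w_0: "\<And>i. i \<notin> ?A \<Longrightarrow> w i = 0" and "k \<le> n"
    and w_A: "\<And>i. i \<in> ?A \<Longrightarrow> 0 \<le> w i \<and> w i \<le> m i \<and> m i - w i \<le> u i k"
    and w_cap: "(\<Sum>i\<in>?A. w i * d i) \<le> c (Suc n)"
    and full: "0 < k \<Longrightarrow> (\<Sum>i\<in>?A. w i * d i) = c (Suc n)"
    and below_k: "\<And>i a. i \<in> ?A \<Longrightarrow> a < k \<Longrightarrow>
      max (m i - w i - u i a) 0 = max (m i - u i a) 0 - w i"
    using last_period_amounts[OF A_sub m_nonneg last] by blast
  have w_nonneg: "0 \<le> w i" for i
    using w_0[of i] w_A[of i] by (cases "i \<in> ?A") auto
  have "capacity_condition I d u n (\<lambda>i. m i - w i) (\<lambda>i. min (r i) n) c"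
    using Suc.prems w_0 w_A below_k full
    by (intro capacity_condition_after_last_period[where k = k]) auto
  moreover have "0 \<le> m i - w i \<and> m i - w i \<le> u i (min (r i) n) \<and> min (r i) n \<le> n"
    if "i \<in> I" for i
  proof (cases "r i = Suc n")
    case True
    with w_A[of i] monoD[OF mono_cap \<open>k \<le> n\<close>, of i] that show ?thesis
      by auto
  next
    case False
    with Suc.prems(1)[OF that] w_0[of i] show ?thesis
      by (simp add: min_absorb1)
  qed
  ultimately obtain z where "capped_schedule I d u n (\<lambda>i. m i - w i) (\<lambda>i. min (r i) n) c z"
    using Suc.IH[of "\<lambda>i. m i - w i" "\<lambda>i. min (r i) n"] by blast
  then have "capped_schedule I d u (Suc n) m r c (z(Suc n := w))"
    by (rule capped_schedule_extend) (use Suc.prems(1) w_0 w_A w_cap w_nonneg in auto)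
  then show ?case
    by blast
qed

end

definition cmils_cap :: "(nat \<Rightarrow> nat) \<Rightarrow> (nat \<Rightarrow> nat \<Rightarrow> real) \<Rightarrow> nat \<Rightarrow> nat \<Rightarrow> real"
  where "cmils_cap r x i s = min 1 (5/2 * xsum r x {1..s} i)"

lemma xsum_atLeastAtMost: "s \<le> r i \<Longrightarrow> xsum r x {1..s} i = (\<Sum>t\<in>{1..s}. x t i)"
  unfolding xsum_def by (intro sum.cong) auto

lemma xsum_atLeastAtMost_eq_1:
  assumes "frac_assignment N r x" and "i \<in> {1..N}" and "r i \<le> s"
  shows "xsum r x {1..s} i = 1"
proof -
  have "{t\<in>{1..s}. t \<le> r i} = {1..r i}"
    using assms(3) by auto
  with assms(1,2) show ?thesis
    unfolding xsum_def frac_assignment_def by simp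
qed

lemma capped_scheduling_cmils:
  assumes "cmils_instance T N d r K C h" and "frac_assignment N r x"
  shows "capped_scheduling {1..N} d (cmils_cap r x)"
proof
  fix i assume i: "i \<in> {1..N}"
  show "0 \<le> d i"
    using assms(1) i unfolding cmils_instance_def by (auto intro: less_imp_le)
  show "cmils_cap r x i 0 = 0"
    unfolding cmils_cap_def xsum_def by simp
  show "mono (cmils_cap r x i)"
  proof
    fix s t :: nat assume "s \<le> t"
    with assms(2) i have "xsum r x {1..s} i \<le> xsum r x {1..t} i"
      unfolding xsum_def frac_assignment_def by (intro sum_mono2) auto
    then show "cmils_cap r x i s \<le> cmils_cap r x i t"
      unfolding cmils_cap_def by linarith
  qed
qed simp

lemma capacity_condition_cmils:
  assumes xfrac: "frac_assignment N r x"
    and ybin: "\<forall>s\<in>{1..T}. ystar s \<in> {0, 1}"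
    and cover: "\<forall>a b. a < b \<and> b \<le> T \<longrightarrow>
        (\<Sum>s\<in>{s\<in>{1..T}. ystar s = 1} \<inter> {a<..b}. C s) \<ge> Rab N d r x a b"
  shows "capacity_condition {1..N} d (cmils_cap r x) T (\<lambda>_. 1) r (\<lambda>s. ystar s * C s)"
  unfolding capacity_condition_def
proof (intro allI impI)
  fix a b assume ab: "a < b" "b \<le> T"
  have "residual_demand {1..N} d (cmils_cap r x) (\<lambda>_. 1) r a b
      = (\<Sum>i\<in>{i\<in>{1..N}. r i \<in> {a<..b}}. max (1 - cmils_cap r x i a) 0 * d i)"
    unfolding residual_demand_def
  proof (rule sum.mono_neutral_right)
    show "\<forall>i\<in>{i\<in>{1..N}. r i \<le> b} - {i\<in>{1..N}. r i \<in> {a<..b}}. max (1 - cmils_cap r x i a) 0 * d i = 0"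
    proof
      fix i assume "i \<in> {i\<in>{1..N}. r i \<le> b} - {i\<in>{1..N}. r i \<in> {a<..b}}"
      with ab xsum_atLeastAtMost_eq_1[OF xfrac, of i a] show "max (1 - cmils_cap r x i a) 0 * d i = 0"
        by (auto simp: cmils_cap_def)
    qed
  qed auto
  also have "\<dots> = Rab N d r x a b"
    unfolding Rab_def cmils_cap_def by (intro sum.cong) (auto simp: max_def min_def)
  also have "\<dots> \<le> (\<Sum>s\<in>{s\<in>{1..T}. ystar s = 1} \<inter> {a<..b}. C s)"
    using cover ab by auto
  also have "\<dots> = (\<Sum>s\<in>{a<..b}. ystar s * C s)"
  proof (rule sum.mono_neutral_cong_left)
    show "\<forall>s\<in>{a<..b} - {s\<in>{1..T}. ystar s = 1} \<inter> {a<..b}. ystar s * C s = 0"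
      using ybin ab by fastforce
  qed (use ab in auto)
  finally show "residual_demand {1..N} d (cmils_cap r x) (\<lambda>_. 1) r a b \<le> (\<Sum>s\<in>{a<..b}. ystar s * C s)" .
qed

lemma cmils_feasible_of_capped_schedule:
  assumes inst: "cmils_instance T N d r K C h"
    and ybin: "\<forall>s\<in>{1..T}. ystar s \<in> {0, 1}"
    and sched: "capped_schedule {1..N} d u T (\<lambda>_. 1) r (\<lambda>s. ystar s * C s) z"
  shows "cmils_feasible T N d r C z ystar"
proof -
  have z_sum: "(\<Sum>t\<in>{1..r i}. z t i) = 1" if "i \<in> {1..N}" for i
    using sched that unfolding capped_schedule_def by auto
  have z_nonneg: "0 \<le> z s i" if "i \<in> {1..N}" "s \<in> {1..r i}" for i s
    using sched that unfolding capped_schedule_def by auto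
  have load: "(\<Sum>i\<in>{i\<in>{1..N}. s \<le> r i}. z s i * d i) \<le> ystar s * C s" if "s \<in> {1..T}" for s
    using sched that unfolding capped_schedule_def by blast
  have d_pos: "0 < d i" if "i \<in> {1..N}" for i
    using inst that unfolding cmils_instance_def by auto
  have load_nonneg: "0 \<le> z s i * d i" if "i \<in> {1..N}" "s \<in> {1..r i}" for i s
    using z_nonneg[OF that] d_pos[OF that(1)] by simp
  have z_le_1: "z s i \<le> 1" if "i \<in> {1..N}" "s \<in> {1..r i}" for i s
    using member_le_sum[of s "{1..r i}" "\<lambda>t. z t i"] z_nonneg z_sum[OF that(1)] that by auto
  have z_le_y: "z s i \<le> ystar s" if i: "i \<in> {1..N}" and s: "s \<in> {1..r i}" for i s
  proof (cases "ystar s = 1")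
    case False
    have "r i \<le> T"
      using inst i unfolding cmils_instance_def by auto
    with s have sT: "s \<in> {1..T}"
      by auto
    with False ybin have "ystar s = 0"
      by auto
    have "z s i * d i \<le> (\<Sum>j\<in>{j\<in>{1..N}. s \<le> r j}. z s j * d j)"
      using i s load_nonneg by (intro member_le_sum) auto
    also have "\<dots> \<le> 0"
      using load[OF sT] \<open>ystar s = 0\<close> by simp
    finally show ?thesis
      using d_pos[OF i] \<open>ystar s = 0\<close> by (simp add: mult_le_0_iff)
  qed (use z_le_1 i s in simp)
  show ?thesis
    using ybin z_nonneg z_sum z_le_1 z_le_y load
    unfolding cmils_feasible_def frac_assignment_def by auto
qed

lemma hcost_le_of_capped_schedule:
  assumes inst: "cmils_instance T N d r K C h" and xfrac: "frac_assignment N r x"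
    and sched: "capped_schedule {1..N} d (cmils_cap r x) T (\<lambda>_. 1) r c z"
  shows "hcost N d r h z \<le> 5/2 * hcost N d r h x"
proof -
  have "(\<Sum>s\<in>{1..r i}. z s i * h i s) \<le> (\<Sum>s\<in>{1..r i}. (5/2 * x s i) * h i s)"
    if i: "i \<in> {1..N}" for i
  proof (rule sum_mult_le_of_partial_sums_le)
    show "h i (Suc s) \<le> h i s" if "s \<in> {1..<r i}" for s
      using inst i that unfolding cmils_instance_def by auto
    show "0 \<le> h i (r i)"
      using inst i unfolding cmils_instance_def by auto
    fix s assume "s \<le> r i"
    with sched i have "(\<Sum>t\<in>{1..s}. z t i) \<le> cmils_cap r x i s"
      unfolding capped_schedule_def by blast
    also have "\<dots> \<le> 5/2 * (\<Sum>t\<in>{1..s}. x t i)"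
      unfolding cmils_cap_def xsum_atLeastAtMost[of s r i x, OF \<open>s \<le> r i\<close>] by simp
    finally show "(\<Sum>t\<in>{1..s}. z t i) \<le> (\<Sum>t\<in>{1..s}. 5/2 * x t i)"
      by (simp add: sum_distrib_left)
  qed
  moreover have "0 \<le> d i" if "i \<in> {1..N}" for i
    using inst that unfolding cmils_instance_def by (auto intro: less_imp_le)
  ultimately have "hcost N d r h z \<le> (\<Sum>i\<in>{1..N}. d i * (\<Sum>s\<in>{1..r i}. (5/2 * x s i) * h i s))"
    unfolding hcost_def by (intro sum_mono) (simp add: mult_left_mono)
  also have "\<dots> = 5/2 * hcost N d r h x"
    unfolding hcost_def by (simp add: sum_distrib_left algebra_simps)
  finally show ?thesis .
qed

theorem lemma1:
  fixes T N :: nat and d K C :: "nat \<Rightarrow> real" and r :: "nat \<Rightarrow> nat"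
    and h x :: "nat \<Rightarrow> nat \<Rightarrow> real" and ystar :: "nat \<Rightarrow> real"
  assumes inst: "cmils_instance T N d r K C h"
    and xfrac: "frac_assignment N r x"
    and ybin: "\<forall>s\<in>{1..T}. ystar s \<in> {0, 1}"
    and cover: "\<forall>a b. a < b \<and> b \<le> T \<longrightarrow>
        (\<Sum>s\<in>{s\<in>{1..T}. ystar s = 1} \<inter> {a<..b}. C s) \<ge> Rab N d r x a b"
  shows "\<exists>xstar. cmils_feasible T N d r C xstar ystar \<and>
           hcost N d r h xstar \<le> 5/2 * hcost N d r h x"
proof -
  interpret capped_scheduling "{1..N}" d "cmils_cap r x"
    using inst xfrac by (rule capped_scheduling_cmils)
  have bounds: "0 \<le> (1::real) \<and> 1 \<le> cmils_cap r x i (r i) \<and> r i \<le> T" if "i \<in> {1..N}" for i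
    using inst xsum_atLeastAtMost_eq_1[OF xfrac that] that
    unfolding cmils_instance_def cmils_cap_def by auto
  obtain z where "capped_schedule {1..N} d (cmils_cap r x) T (\<lambda>_. 1) r (\<lambda>s. ystar s * C s) z"
    using capped_schedule_exists[OF bounds capacity_condition_cmils[OF xfrac ybin cover]] by blast
  with cmils_feasible_of_capped_schedule[OF inst ybin] hcost_le_of_capped_schedule[OF inst xfrac]
  show ?thesis
    by blast
qed

end
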